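(* Let $\lambda>0$, define the entire function $A(\lambda, z) = \left( \frac{\sin \pi z}{\pi} \right)\sum_{n=0}^{\infty} (-1)^n\frac{ e^{-\lambda n}}{z-n}$, and $B(w) = - \frac{e^w}{e^w + 1}$ for real $w$. If $\Re(z) < 0$ then $$A(\lambda, z) = \left( \frac{\sin \pi z}{\pi} \right) \int_0^{\infty} B(\lambda + w) \, e^{z w} \,\mathrm{d}w,$$ and if $\Re(z) >0$ then $$A(\lambda, z) = e^{-\lambda z} - \left( \frac{\sin \pi z}{\pi} \right) \int_{-\infty}^{0} B(\lambda + w) \, e^{z w} \,\mathrm{d}w.$$ *)

theory Defs
  imports "HOL-Analysis.Analysis"
begin

definition A_series :: "real \<Rightarrow> complex \<Rightarrow> complex" where
  "A_series lam z =
     (sin (complex_of_real pi * z) / complex_of_real pi) *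
     (\<Sum>n. (-1) ^ n * complex_of_real (exp (- lam * real n)) / (z - of_nat n))"

text \<open>The entire function A(lam, .): the series formula off the nonnegative integers,
  extended by continuity (its limit) at the removable singularities z = n.\<close>
definition A :: "real \<Rightarrow> complex \<Rightarrow> complex" where
  "A lam z = (if z \<in> range (of_nat :: nat \<Rightarrow> complex)
              then Lim (at z) (A_series lam) else A_series lam z)"

definition B :: "real \<Rightarrow> real" where
  "B w = - exp w / (exp w + 1)"

end

theory Submission
  imports Defs
begin

text \<open>
  For w > -lam the factor B(lam + w) = -1 / (1 + e^{-(lam + w)}) is an alternating geometric
  series in e^{-(lam + w)}, and for w < -lam, B(lam + w) = -e^{lam + w} / (1 + e^{lam + w}) is
  one in e^{lam + w}; by dominated convergence both may be integrated termwise against e^{zw}.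
  For Re z < 0 this gives the series defining A directly. For Re z > 0 the pieces of the
  integral over (-inf, 0] produce, besides the series for A, the two alternating series
  sum (-1)^n / (z - n) and sum (-1)^n / (z + 1 + n), whose difference is the partial fraction
  expansion of pi / sin(pi z); it is evaluated through the reflection formula for the digamma
  function. At the positive integers both sides are continuous, so the identity extends to the
  removable singularities of the series.
\<close>

lemma has_integral_exhaustion_dominated:
  fixes g :: "'n::euclidean_space \<Rightarrow> 'm::euclidean_space"
  assumes int: "\<And>k. (g has_integral y k) (T k)" and sub: "\<And>k. T k \<subseteq> S"
    and exhaust: "\<And>x. x \<in> S \<Longrightarrow> \<forall>\<^sub>F k in sequentially. x \<in> T k"
    and h: "h integrable_on S" and le: "\<And>x. x \<in> S \<Longrightarrow> norm (g x) \<le> h x"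
    and lim: "y \<longlonglongrightarrow> l"
  shows "(g has_integral l) S"
proof (rule has_integral_dominated_convergence[OF _ h _ _ lim])
  show "((\<lambda>x. if x \<in> T k then g x else 0) has_integral y k) S" for k
    using int[of k] sub[of k] by (simp add: has_integral_restrict)
  show "\<forall>x\<in>S. norm (if x \<in> T k then g x else 0) \<le> h x" for k
    using le le[THEN order_trans[OF norm_ge_zero]] by auto
  show "\<forall>x\<in>S. (\<lambda>k. if x \<in> T k then g x else 0) \<longlonglongrightarrow> g x"
  proof
    fix x assume "x \<in> S"
    from exhaust[OF this] have "\<forall>\<^sub>F k in sequentially. (if x \<in> T k then g x else 0) = g x"
      by (rule eventually_mono) simp
    then show "(\<lambda>k. if x \<in> T k then g x else 0) \<longlonglongrightarrow> g x"
      by (rule tendsto_eventually)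
  qed
qed

lemma has_integral_cexp_Icc:
  fixes c :: complex and a b :: real
  assumes "c \<noteq> 0" "a \<le> b"
  shows "((\<lambda>w. exp (c * of_real w)) has_integral
           (exp (c * of_real b) - exp (c * of_real a)) / c) {a..b}"
proof -
  have "((\<lambda>w. exp (c * of_real w) / c) has_vector_derivative exp (c * of_real x))
      (at x within {a..b})" for x
  proof -
    have "((\<lambda>t. exp (c * t) / c) has_field_derivative exp (c * of_real x)) (at (of_real x))"
      using assms by (auto intro!: derivative_eq_intros)
    from has_vector_derivative_real_field[OF this] show ?thesis by simp
  qed
  from fundamental_theorem_of_calculus[OF assms(2) this] show ?thesis
    by (simp add: diff_divide_distrib)
qed

lemma integrable_on_exp_atMost:
  fixes d b :: real
  assumes "d > 0"
  shows "(\<lambda>w. exp (d * w)) integrable_on {..b}"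
proof -
  have "(\<lambda>w. exp (d * - w)) integrable_on {-b..}"
    using integrable_on_exp_minus_to_infinity[OF assms] by simp
  then have "(\<lambda>w. exp (d * - w)) absolutely_integrable_on {-b..}"
    by (intro nonnegative_absolutely_integrable_1) auto
  then have "(\<lambda>w. exp (d * w)) absolutely_integrable_on {..b}"
    using has_absolute_integral_reflect_real[of "{-b..}" "{..b}" "\<lambda>w. exp (d * w)"] by force
  then show ?thesis
    using set_lebesgue_integral_eq_integral(1) by blast
qed

lemma has_integral_cexp_atLeast:
  fixes c :: complex and a :: real
  assumes "Re c < 0"
  shows "((\<lambda>w. exp (c * of_real w)) has_integral - exp (c * of_real a) / c) {a..}"
proof (rule has_integral_exhaustion_dominated)
  show "((\<lambda>w. exp (c * of_real w)) has_integral
      (exp (c * of_real (a + real k)) - exp (c * of_real a)) / c) {a..a + real k}" for k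
    using assms by (intro has_integral_cexp_Icc) auto
  show "x \<in> {a..} \<Longrightarrow> \<forall>\<^sub>F k in sequentially. x \<in> {a..a + real k}" for x
    by (auto intro: eventually_sequentiallyI[of "nat \<lceil>x - a\<rceil>"] simp: nat_ceiling_le_eq)
  show "(\<lambda>w. exp (- (- Re c) * w)) integrable_on {a..}"
    using assms by (intro integrable_on_exp_minus_to_infinity) simp
  have "(\<lambda>k. exp (Re c * (a + real k))) \<longlonglongrightarrow> 0"
    using assms by real_asymp
  then have "(\<lambda>k. exp (c * of_real (a + real k))) \<longlonglongrightarrow> 0"
    by (subst tendsto_norm_zero_iff[symmetric]) simp
  then have "(\<lambda>k. (exp (c * of_real (a + real k)) - exp (c * of_real a)) / c)
      \<longlonglongrightarrow> (0 - exp (c * of_real a)) / c"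
    using assms by (intro tendsto_intros) auto
  then show "(\<lambda>k. (exp (c * of_real (a + real k)) - exp (c * of_real a)) / c)
      \<longlonglongrightarrow> - exp (c * of_real a) / c"
    by simp
qed auto

lemma has_integral_cexp_atMost:
  fixes c :: complex and b :: real
  assumes "Re c > 0"
  shows "((\<lambda>w. exp (c * of_real w)) has_integral exp (c * of_real b) / c) {..b}"
proof (rule has_integral_exhaustion_dominated)
  show "((\<lambda>w. exp (c * of_real w)) has_integral
      (exp (c * of_real b) - exp (c * of_real (b - real k))) / c) {b - real k..b}" for k
    using assms by (intro has_integral_cexp_Icc) auto
  show "x \<in> {..b} \<Longrightarrow> \<forall>\<^sub>F k in sequentially. x \<in> {b - real k..b}" for x
    by (auto intro: eventually_sequentiallyI[of "nat \<lceil>b - x\<rceil>"] simp: nat_ceiling_le_eq)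
  show "(\<lambda>w. exp (Re c * w)) integrable_on {..b}"
    using assms by (rule integrable_on_exp_atMost)
  have "(\<lambda>k. exp (Re c * (b - real k))) \<longlonglongrightarrow> 0"
    using assms by real_asymp
  then have "(\<lambda>k. exp (c * of_real (b - real k))) \<longlonglongrightarrow> 0"
    by (subst tendsto_norm_zero_iff[symmetric]) simp
  then have "(\<lambda>k. (exp (c * of_real b) - exp (c * of_real (b - real k))) / c)
      \<longlonglongrightarrow> (exp (c * of_real b) - 0) / c"
    using assms by (intro tendsto_intros) auto
  then show "(\<lambda>k. (exp (c * of_real b) - exp (c * of_real (b - real k))) / c)
      \<longlonglongrightarrow> exp (c * of_real b) / c"
    by simp
qed auto

lemma has_integral_Diff_singleton:
  fixes f :: "'n::euclidean_space \<Rightarrow> 'a::banach"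
  shows "(f has_integral I) (S - {a}) \<longleftrightarrow> (f has_integral I) S"
  by (rule has_integral_spike_set_eq) (auto intro: negligible_subset[OF negligible_sing[of a]])

lemma integrable_on_Diff_singleton:
  fixes f :: "'n::euclidean_space \<Rightarrow> 'a::banach"
  shows "f integrable_on (S - {a}) \<longleftrightarrow> f integrable_on S"
  by (simp add: integrable_on_def has_integral_Diff_singleton)

lemma abs_sum_alternating_geometric_le:
  fixes y :: real
  assumes "0 \<le> y" "y \<le> 1"
  shows "\<bar>\<Sum>k<N. (- y) ^ k\<bar> \<le> 2"
proof -
  have "\<bar>1 - p\<bar> \<le> 2 * (1 + y)" if "\<bar>p\<bar> \<le> 1" for p :: real
    using that assms by (simp add: abs_le_iff)
  moreover have "\<bar>(- y) ^ N\<bar> \<le> 1"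
    using assms by (simp add: power_abs power_le_one)
  ultimately have numerator: "\<bar>1 - (- y) ^ N\<bar> \<le> 2 * (1 + y)"
    by blast
  have "(\<Sum>k<N. (- y) ^ k) = (1 - (- y) ^ N) / (1 + y)"
    using assms by (subst sum_gp_strict) simp_all
  moreover have "\<bar>(1 - (- y) ^ N) / (1 + y)\<bar> = \<bar>1 - (- y) ^ N\<bar> / (1 + y)"
    using assms by (simp add: abs_divide)
  ultimately show ?thesis
    using numerator assms by (simp add: divide_le_eq)
qed

lemma integral_alternating_geometric_sums:
  fixes \<phi> :: "real \<Rightarrow> complex" and q :: "real \<Rightarrow> real"
  assumes q: "\<And>w. w \<in> S \<Longrightarrow> 0 \<le> q w \<and> q w < 1"
    and terms: "\<And>n. ((\<lambda>w. of_real (q w) ^ n * \<phi> w) has_integral c n) S"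
    and dom: "(\<lambda>w. norm (\<phi> w)) integrable_on S"
  shows "(\<lambda>w. \<phi> w / of_real (1 + q w)) integrable_on S"
    and "(\<lambda>n. (-1) ^ n * c n) sums integral S (\<lambda>w. \<phi> w / of_real (1 + q w))"
proof -
  define f where "f N w = of_real (\<Sum>n<N. (- q w) ^ n) * \<phi> w" for N w
  have f_int: "(f N has_integral (\<Sum>n<N. (-1) ^ n * c n)) S" for N
  proof -
    have "f N = (\<lambda>w. \<Sum>n<N. (-1) ^ n * (of_real (q w) ^ n * \<phi> w))"
      by (intro ext) (simp add: f_def power_minus' sum_distrib_right mult.assoc)
    then show ?thesis
      by (simp add: has_integral_sum has_integral_mult_right terms)
  qed
  have f_le: "norm (f N w) \<le> 2 * norm (\<phi> w)" if "w \<in> S" for N w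
  proof -
    have "norm (f N w) = \<bar>\<Sum>n<N. (- q w) ^ n\<bar> * norm (\<phi> w)"
      unfolding f_def norm_mult norm_of_real ..
    also have "\<dots> \<le> 2 * norm (\<phi> w)"
      using abs_sum_alternating_geometric_le[of "q w" N] q[OF that] by (intro mult_right_mono) auto
    finally show ?thesis .
  qed
  have f_lim: "(\<lambda>N. f N w) \<longlonglongrightarrow> \<phi> w / of_real (1 + q w)" if "w \<in> S" for w
  proof -
    have "(\<lambda>n. (- q w) ^ n) sums (1 / (1 - - q w))"
      using q[OF that] by (intro geometric_sums) simp
    then have "(\<lambda>N. \<Sum>n<N. (- q w) ^ n) \<longlonglongrightarrow> 1 / (1 + q w)"
      by (simp add: sums_def)
    then have "(\<lambda>N. f N w) \<longlonglongrightarrow> of_real (1 / (1 + q w)) * \<phi> w"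
      unfolding f_def by (intro tendsto_intros)
    then show ?thesis
      by (simp add: divide_inverse mult.commute)
  qed
  have dom2: "(\<lambda>w. 2 * norm (\<phi> w)) integrable_on S"
    using integrable_on_mult_right[OF dom] by simp
  note dc =
    dominated_convergence[of f S _ "\<lambda>w. \<phi> w / of_real (1 + q w)", OF _ dom2 f_le f_lim]
  show "(\<lambda>w. \<phi> w / of_real (1 + q w)) integrable_on S"
    using dc(1) f_int by blast
  have "(\<lambda>N. integral S (f N)) \<longlonglongrightarrow> integral S (\<lambda>w. \<phi> w / of_real (1 + q w))"
    using dc(2) f_int by blast
  moreover have "integral S (f N) = (\<Sum>n<N. (-1) ^ n * c n)" for N
    using f_int by (rule integral_unique)
  ultimately show "(\<lambda>n. (-1) ^ n * c n) sums integral S (\<lambda>w. \<phi> w / of_real (1 + q w))"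
    unfolding sums_def by simp
qed

lemma Digamma_reflection_complex:
  fixes u :: complex
  assumes u: "u \<notin> \<int>"
  shows "Digamma (1 - u) - Digamma u = of_real pi * cot (of_real pi * u)"
proof -
  have "1 - u \<notin> \<int>"
    using u Ints_diff[OF Ints_1, of "1 - u"] by auto
  then have poles: "u \<notin> \<int>\<^sub>\<le>\<^sub>0" "1 - u \<notin> \<int>\<^sub>\<le>\<^sub>0"
    using u by (auto elim: nonpos_Ints_cases)
  have s: "sin (of_real pi * u) \<noteq> 0"
    using u by (subst sin_eq_0) auto
  have "((\<lambda>t. Gamma t * Gamma (1 - t)) has_field_derivative
          Gamma u * Gamma (1 - u) * (Digamma u - Digamma (1 - u))) (at u)"
    using poles by (auto intro!: derivative_eq_intros simp: algebra_simps)
  moreover have "((\<lambda>t. Gamma t * Gamma (1 - t)) has_field_derivative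
          - (of_real pi * (cos (of_real pi * u) * of_real pi)) / (sin (of_real pi * u))\<^sup>2) (at u)"
    unfolding Gamma_reflection_complex
    using s by (auto intro!: derivative_eq_intros simp: power2_eq_square)
  ultimately have "of_real pi / sin (of_real pi * u) * (Digamma u - Digamma (1 - u))
      = - (of_real pi * (cos (of_real pi * u) * of_real pi)) / (sin (of_real pi * u))\<^sup>2"
    by (metis DERIV_unique Gamma_reflection_complex)
  then have "Digamma u - Digamma (1 - u)
      = - (of_real pi * (cos (of_real pi * u) * of_real pi)) / (sin (of_real pi * u))\<^sup>2
        / (of_real pi / sin (of_real pi * u))"
    using s by (metis nonzero_mult_div_cancel_left divide_eq_0_iff of_real_eq_0_iff pi_neq_zero)
  also have "\<dots> = - of_real pi * cot (of_real pi * u)"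
    using s by (simp add: cot_def field_simps power2_eq_square)
  finally show ?thesis
    by (simp add: algebra_simps)
qed

lemma Digamma_diff_sums:
  fixes u v :: complex
  assumes "u \<noteq> 0" "v \<noteq> 0"
  shows "(\<lambda>k. inverse (v + of_nat k) - inverse (u + of_nat k)) sums (Digamma u - Digamma v)"
proof -
  have "(\<lambda>k. inverse (of_nat (Suc k)) - inverse (w + of_nat k))
      sums (Digamma w + euler_mascheroni)" if "w \<noteq> 0" for w :: complex
    using summable_sums[OF summable_Digamma[OF that]] by (simp add: Digamma_def)
  from sums_diff[OF this[OF assms(1)] this[OF assms(2)]] show ?thesis
    by simp
qed

lemma alternating_harmonic_sums_Digamma:
  fixes v s :: complex
  assumes "v \<noteq> 0" "v + 1 \<noteq> 0"
    and "(\<lambda>n. (-1) ^ n / (v + of_nat n)) sums s"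
  shows "s = (Digamma ((v + 1) / 2) - Digamma (v / 2)) / 2"
proof -
  have pairs: "(\<Sum>n\<in>{j * 2..<j * 2 + 2}. (-1) ^ n / (v + of_nat n))
      = (inverse (v / 2 + of_nat j) - inverse ((v + 1) / 2 + of_nat j)) / 2" for j
  proof -
    have "{j * 2..<j * 2 + 2} = {2 * j, 2 * j + 1}"
      by auto
    moreover have "inverse (v / 2 + of_nat j) = 2 / (v + of_nat (2 * j))"
      and "inverse ((v + 1) / 2 + of_nat j) = 2 / (v + of_nat (2 * j + 1))"
      by (simp_all add: field_simps)
    ultimately show ?thesis
      by (simp add: power_mult)
  qed
  have "(\<lambda>j. (inverse (v / 2 + of_nat j) - inverse ((v + 1) / 2 + of_nat j)) / 2) sums s"
    using sums_group[OF assms(3), of 2] by (simp only: pairs)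
  moreover have "(\<lambda>j. (inverse (v / 2 + of_nat j) - inverse ((v + 1) / 2 + of_nat j)) / 2)
      sums ((Digamma ((v + 1) / 2) - Digamma (v / 2)) / 2)"
    using assms(1,2) by (intro sums_divide Digamma_diff_sums) auto
  ultimately show ?thesis
    by (rule sums_unique2)
qed

text \<open>
  Convergence of the two alternating series is assumed, not proved: where the lemma is applied
  it comes for free from the termwise integrations.
\<close>

lemma alternating_partial_fractions_csc:
  fixes z T U :: complex
  assumes z: "z \<notin> \<int>"
    and T: "(\<lambda>n. (-1) ^ n / (z - of_nat n)) sums T"
    and U: "(\<lambda>n. (-1) ^ n / (z + 1 + of_nat n)) sums U"
  shows "T - U = of_real pi / sin (of_real pi * z)"
proof -
  define a where "a = of_real pi * z / 2"
  have "z \<noteq> of_int k" for k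
    using z by auto
  from this[of 0] this[of 1] this[of "-1"] this[of "-2"]
  have "- z \<noteq> 0" "- z + 1 \<noteq> 0" "z + 1 \<noteq> 0" "z + 1 + 1 \<noteq> 0"
    by (auto simp: add_eq_0_iff minus_equation_iff)
  have "(\<lambda>n. (-1) ^ n / (- z + of_nat n)) = (\<lambda>n. - ((-1) ^ n / (z - of_nat n)))"
    by (auto simp: fun_eq_iff divide_minus_right[symmetric])
  with sums_minus[OF T] have minus_T: "(\<lambda>n. (-1) ^ n / (- z + of_nat n)) sums - T"
    by simp
  have "- T = (Digamma ((- z + 1) / 2) - Digamma (- z / 2)) / 2"
    using \<open>- z \<noteq> 0\<close> \<open>- z + 1 \<noteq> 0\<close> minus_T by (rule alternating_harmonic_sums_Digamma)
  then have T_eq: "- T = (Digamma ((1 - z) / 2) - Digamma (- z / 2)) / 2"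
    by (simp add: add.commute)
  have "U = (Digamma ((z + 1 + 1) / 2) - Digamma ((z + 1) / 2)) / 2"
    using \<open>z + 1 \<noteq> 0\<close> \<open>z + 1 + 1 \<noteq> 0\<close> U by (rule alternating_harmonic_sums_Digamma)
  then have U_eq: "U = (Digamma ((z + 2) / 2) - Digamma ((z + 1) / 2)) / 2"
    by (simp add: add.assoc)
  have "- z / 2 \<notin> \<int>"
    using z Ints_mult[of "-2" "- z / 2"] by auto
  from Digamma_reflection_complex[OF this]
  have R1: "Digamma ((z + 2) / 2) - Digamma (- z / 2) = - of_real pi * cot a"
    by (simp add: a_def field_simps cot_def)
  have "(z + 1) / 2 \<notin> \<int>"
  proof
    assume "(z + 1) / 2 \<in> \<int>"
    then have "2 * ((z + 1) / 2) - 1 \<in> \<int>"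
      by (intro Ints_diff Ints_mult) auto
    moreover have "2 * ((z + 1) / 2) - 1 = z"
      by (simp add: field_simps)
    ultimately show False
      using z by metis
  qed
  from Digamma_reflection_complex[OF this]
  have "Digamma ((1 - z) / 2) - Digamma ((z + 1) / 2) = of_real pi * cot (a + of_real (pi / 2))"
    by (simp add: a_def field_simps)
  then have R2: "Digamma ((1 - z) / 2) - Digamma ((z + 1) / 2) = - of_real pi * tan a"
    by (simp add: cot_def tan_def sin_add cos_add sin_of_real cos_of_real)
  have sin_pi_z: "sin (of_real pi * z) = 2 * sin a * cos a"
    unfolding a_def using sin_double[of "of_real pi * z / 2"] by simp
  moreover have "sin (of_real pi * z) \<noteq> 0"
    using z by (subst sin_eq_0) auto
  ultimately have "sin a \<noteq> 0" "cos a \<noteq> 0"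
    by auto
  have "T - U = - ((Digamma ((z + 2) / 2) - Digamma (- z / 2))
                   + (Digamma ((1 - z) / 2) - Digamma ((z + 1) / 2))) / 2"
    using T_eq U_eq by (simp add: field_simps)
  also have "\<dots> = of_real pi * (cot a + tan a) / 2"
    unfolding R1 R2 by (simp add: algebra_simps)
  also have "\<dots> = of_real pi / sin (of_real pi * z)"
    unfolding sin_pi_z using \<open>sin a \<noteq> 0\<close> \<open>cos a \<noteq> 0\<close>
    by (simp add: cot_def tan_def field_simps power2_eq_square sin_cos_squared_add3)
  finally show ?thesis .
qed

lemma B_eq: "B u = - 1 / (1 + exp (- u))"
  unfolding B_def by (simp add: exp_minus field_simps)

lemma abs_B_le_1: "\<bar>B u\<bar> \<le> 1"
  unfolding B_def by (simp add: abs_div_pos add_pos_pos)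

lemma continuous_on_B [continuous_intros]:
  "continuous_on S f \<Longrightarrow> continuous_on S (\<lambda>x. B (f x))"
  unfolding B_def by (intro continuous_intros) (auto simp: add_pos_pos less_imp_neq[symmetric])

lemma of_real_exp_power_mult_cexp:
  fixes r s w :: real and z :: complex
  shows "of_real (exp (r + s * w)) ^ n * exp (z * of_real w)
       = of_real (exp (r * n)) * exp ((z + of_real s * of_nat n) * of_real w)"
proof -
  have "of_real (exp (r + s * w)) ^ n
      = exp (of_real (r * n) + of_real s * of_nat n * of_real w :: complex)"
    by (simp add: exp_of_real[symmetric] exp_of_nat_mult[symmetric] algebra_simps)
  then show ?thesis
    by (simp add: exp_add[symmetric] exp_of_real[symmetric] algebra_simps)
qed

lemma integral_B_cexp_atLeast_sums:
  fixes lam :: real and z :: complex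
  assumes lam: "lam > 0" and z: "Re z < 0"
  shows "(\<lambda>n. (-1) ^ n * of_real (exp (- lam * n)) / (z - of_nat n))
           sums integral {0..} (\<lambda>w. of_real (B (lam + w)) * exp (z * of_real w))"
proof -
  \<comment> \<open>The ratio is written as \<open>exp (r + s * w)\<close> to match \<open>of_real_exp_power_mult_cexp\<close>.\<close>
  have "(\<lambda>n. (-1) ^ n * (of_real (exp (- lam * n)) / (z - of_nat n)))
      sums integral {0..} (\<lambda>w. - exp (z * of_real w) / of_real (1 + exp (- lam + - 1 * w)))"
  proof (rule integral_alternating_geometric_sums)
    show "0 \<le> exp (- lam + - 1 * w) \<and> exp (- lam + - 1 * w) < 1" if "w \<in> {0..}" for w
      using that lam by simp
    show "((\<lambda>w. of_real (exp (- lam + - 1 * w)) ^ n * - exp (z * of_real w)) has_integral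
        of_real (exp (- lam * n)) / (z - of_nat n)) {0..}" for n
      unfolding mult_minus_right of_real_exp_power_mult_cexp
      using has_integral_mult_right[OF has_integral_cexp_atLeast[of "z - of_nat n" 0],
              of "- of_real (exp (- lam * n))"] z
      by simp
    show "(\<lambda>w. norm (- exp (z * of_real w))) integrable_on {0..}"
      using integrable_on_exp_minus_to_infinity[of "- Re z" 0] z by simp
  qed
  then show ?thesis
    by (simp add: B_eq)
qed

lemma exp_mult_cexp_shift_cancel:
  fixes lam r :: real and z :: complex
  shows "of_real (exp (lam * r)) * exp ((z + of_real r) * of_real (- lam))
       = exp (- of_real lam * z)"
  by (simp add: exp_of_real[symmetric] exp_add[symmetric] algebra_simps)

lemma integral_B_cexp_Ioc_sums:
  fixes lam :: real and z :: complex
  assumes lam: "lam > 0" and z: "z \<notin> \<int>"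
  defines "g \<equiv> \<lambda>w. of_real (B (lam + w)) * exp (z * of_real w)"
  shows "g integrable_on {-lam<..0}"
    and "(\<lambda>n. (-1) ^ n * ((exp (- of_real lam * z) - of_real (exp (- lam * n))) / (z - of_nat n)))
           sums integral {-lam<..0} g"
proof -
  have g: "g = (\<lambda>w. - exp (z * of_real w) / of_real (1 + exp (- lam + - 1 * w)))"
    by (simp add: g_def B_eq)
  have q: "0 \<le> exp (- lam + - 1 * w) \<and> exp (- lam + - 1 * w) < 1" if "w \<in> {-lam<..0}" for w
    using that by simp
  have terms: "((\<lambda>w. of_real (exp (- lam + - 1 * w)) ^ n * - exp (z * of_real w)) has_integral
      (exp (- of_real lam * z) - of_real (exp (- lam * n))) / (z - of_nat n)) {-lam<..0}" for n
  proof -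
    define e where "e = (of_real (exp (- lam * n)) :: complex)"
    have "z - of_nat n \<noteq> 0"
      using z by (metis Ints_of_nat right_minus_eq)
    from has_integral_mult_right[OF has_integral_cexp_Icc[OF this, of "- lam" 0], of "- e"] lam
    have "((\<lambda>w. - e * exp ((z - of_nat n) * of_real w)) has_integral
        - e * ((1 - exp ((z - of_nat n) * of_real (- lam))) / (z - of_nat n))) {-lam..0}"
      by simp
    moreover have "e * exp ((z - of_nat n) * of_real (- lam)) = exp (- of_real lam * z)"
      unfolding e_def using exp_mult_cexp_shift_cancel[of lam "- real n" z] by simp
    then have "- e * ((1 - exp ((z - of_nat n) * of_real (- lam))) / (z - of_nat n))
        = (exp (- of_real lam * z) - e) / (z - of_nat n)"
      by (simp add: algebra_simps diff_divide_distrib)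
    moreover have "of_real (exp (- lam + - 1 * w)) ^ n * - exp (z * of_real w)
        = - e * exp ((z - of_nat n) * of_real w)" for w
      unfolding e_def mult_minus_right of_real_exp_power_mult_cexp by simp
    ultimately show ?thesis
      unfolding e_def greaterThanAtMost_eq_atLeastAtMost_diff has_integral_Diff_singleton
      by simp
  qed
  have "(\<lambda>w. norm (- exp (z * of_real w))) integrable_on {-lam<..0}"
    unfolding greaterThanAtMost_eq_atLeastAtMost_diff integrable_on_Diff_singleton
    by (intro integrable_continuous_interval continuous_intros)
  note sums = integral_alternating_geometric_sums[OF q terms this]
  show "g integrable_on {-lam<..0}"
    using sums(1) g by simp
  show "(\<lambda>n. (-1) ^ n * ((exp (- of_real lam * z) - of_real (exp (- lam * n))) / (z - of_nat n)))
           sums integral {-lam<..0} g"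
    using sums(2) g by simp
qed

lemma integral_B_cexp_lessThan_sums:
  fixes lam :: real and z :: complex
  assumes lam: "lam > 0" and z: "Re z > 0"
  defines "g \<equiv> \<lambda>w. of_real (B (lam + w)) * exp (z * of_real w)"
  shows "g integrable_on {..<-lam}"
    and "(\<lambda>n. (-1) ^ n * (- exp (- of_real lam * z) / (z + 1 + of_nat n)))
           sums integral {..<-lam} g"
proof -
  define \<phi> where "\<phi> w = - of_real (exp (lam + 1 * w)) * exp (z * of_real w)" for w
  have g: "g = (\<lambda>w. \<phi> w / of_real (1 + exp (lam + 1 * w)))"
    by (simp add: g_def \<phi>_def B_def field_simps)
  have q: "0 \<le> exp (lam + 1 * w) \<and> exp (lam + 1 * w) < 1" if "w \<in> {..<-lam}" for w
    using that by simp
  have Iio: "{..<-lam} = {..-lam} - {-lam}"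
    by auto
  have terms: "((\<lambda>w. of_real (exp (lam + 1 * w)) ^ n * \<phi> w) has_integral
      - exp (- of_real lam * z) / (z + 1 + of_nat n)) {..<-lam}" for n
  proof -
    define e where "e = (of_real (exp (lam * Suc n)) :: complex)"
    have "Re (z + 1 + of_nat n) > 0"
      using z by simp
    from has_integral_mult_right[OF has_integral_cexp_atMost[OF this, of "- lam"], of "- e"]
    have "((\<lambda>w. - e * exp ((z + 1 + of_nat n) * of_real w)) has_integral
        - e * exp ((z + 1 + of_nat n) * of_real (- lam)) / (z + 1 + of_nat n)) {..-lam}"
      by simp
    moreover have "e * exp ((z + 1 + of_nat n) * of_real (- lam)) = exp (- of_real lam * z)"
      unfolding e_def using exp_mult_cexp_shift_cancel[of lam "real (Suc n)" z]
      by (simp add: add.assoc)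
    moreover have "of_real (exp (lam + 1 * w)) ^ n * \<phi> w
        = - e * exp ((z + 1 + of_nat n) * of_real w)" for w
    proof -
      have "of_real (exp (lam + 1 * w)) ^ n * \<phi> w
          = - (of_real (exp (lam + 1 * w)) ^ Suc n * exp (z * of_real w))"
        by (simp only: \<phi>_def power_Suc) (simp add: mult_ac)
      also have "\<dots> = - e * exp ((z + 1 + of_nat n) * of_real w)"
        unfolding of_real_exp_power_mult_cexp e_def by (simp add: add.assoc)
      finally show ?thesis .
    qed
    ultimately show ?thesis
      unfolding Iio has_integral_Diff_singleton by simp
  qed
  have "(\<lambda>w. exp lam * exp ((Re z + 1) * w)) integrable_on {..-lam}"
    using z by (intro integrable_on_mult_right integrable_on_exp_atMost) simp
  then have "(\<lambda>w. norm (\<phi> w)) integrable_on {..<-lam}"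
    unfolding Iio integrable_on_Diff_singleton
    by (simp add: \<phi>_def norm_mult exp_add[symmetric] algebra_simps)
  note sums = integral_alternating_geometric_sums[OF q terms this]
  show "g integrable_on {..<-lam}"
    using sums(1) g by simp
  show "(\<lambda>n. (-1) ^ n * (- exp (- of_real lam * z) / (z + 1 + of_nat n)))
      sums integral {..<-lam} g"
    using sums(2) g by simp
qed

lemma summable_A_series_terms:
  fixes lam :: real and z :: complex
  assumes lam: "lam > 0"
  shows "summable (\<lambda>n. (-1) ^ n * of_real (exp (- lam * n)) / (z - of_nat n))"
proof (rule summable_comparison_test_ev)
  show "summable (\<lambda>n. exp (- lam) ^ n)"
    using lam by (intro summable_geometric) simp
  have "\<forall>\<^sub>F n in sequentially. norm z + 1 \<le> real n"
    by (meson eventually_sequentiallyI nat_ceiling_le_eq)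
  then show "\<forall>\<^sub>F n in sequentially.
      norm ((-1) ^ n * of_real (exp (- lam * n)) / (z - of_nat n)) \<le> exp (- lam) ^ n"
  proof (rule eventually_mono)
    fix n assume n: "norm z + 1 \<le> real n"
    have "1 \<le> norm (z - of_nat n)"
      using n norm_triangle_ineq2[of "of_nat n" z] by (simp add: norm_minus_commute)
    then have "exp (- lam * n) / norm (z - of_nat n) \<le> exp (- lam * n)"
      by (simp add: divide_le_eq)
    then show "norm ((-1) ^ n * of_real (exp (- lam * n)) / (z - of_nat n)) \<le> exp (- lam) ^ n"
      by (simp add: norm_divide norm_mult norm_power exp_of_nat_mult[symmetric] mult.commute)
  qed
qed

lemma A_series_right_half_plane:
  fixes lam :: real and z :: complex
  assumes lam: "lam > 0" and z: "Re z > 0" and z_Ints: "z \<notin> \<int>"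
  shows "A_series lam z = exp (- of_real lam * z) -
           (sin (of_real pi * z) / of_real pi) *
           integral {..0} (\<lambda>w. of_real (B (lam + w)) * exp (z * of_real w))"
proof -
  define g where "g = (\<lambda>w. of_real (B (lam + w)) * exp (z * of_real w))"
  define E where "E = exp (- of_real lam * z)"
  define a where "a n = (-1) ^ n * of_real (exp (- lam * n)) / (z - of_nat n)" for n
  define J1 where "J1 = integral {..<-lam} g"
  define J2 where "J2 = integral {-lam<..0} g"
  have "E \<noteq> 0"
    by (simp add: E_def)
  have a: "a sums suminf a"
    unfolding a_def using summable_A_series_terms[OF lam] by (rule summable_sums)
  note I1 = integral_B_cexp_lessThan_sums[OF lam z, folded g_def J1_def E_def]
  note I2 = integral_B_cexp_Ioc_sums[OF lam z_Ints, folded g_def J2_def E_def]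
  have "(\<lambda>n. E * ((-1) ^ n / (z - of_nat n))) sums (J2 + suminf a)"
    using sums_add[OF I2(2) a] by (simp add: a_def algebra_simps diff_divide_distrib)
  from sums_divide[OF this, of E]
  have T: "(\<lambda>n. (-1) ^ n / (z - of_nat n)) sums ((J2 + suminf a) / E)"
    using \<open>E \<noteq> 0\<close> by simp
  from sums_divide[OF I1(2), of "- E"]
  have U: "(\<lambda>n. (-1) ^ n / (z + 1 + of_nat n)) sums (J1 / - E)"
    using \<open>E \<noteq> 0\<close> by simp
  have csc: "(J2 + suminf a) / E - J1 / - E = of_real pi / sin (of_real pi * z)"
    using alternating_partial_fractions_csc[OF z_Ints T U] .
  have "(g has_integral J1) {..<-lam}" "(g has_integral J2) {-lam<..0}"
    using I1(1) I2(1) by (simp_all add: J1_def J2_def has_integral_integral)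
  moreover have "{..<-lam} \<inter> {-lam<..0} = {}"
    by auto
  then have "negligible ({..<-lam} \<inter> {-lam<..0})"
    by (metis negligible_empty)
  ultimately have "(g has_integral (J1 + J2)) ({..<-lam} \<union> {-lam<..0})"
    by (rule has_integral_Un)
  moreover have "{..<-lam} \<union> {-lam<..0} = {..0} - {-lam}"
    using lam by auto
  ultimately have "(g has_integral (J1 + J2)) ({..0} - {-lam})"
    by simp
  then have integral: "integral {..0} g = J1 + J2"
    by (simp add: has_integral_Diff_singleton integral_unique)
  have "sin (of_real pi * z) \<noteq> 0"
    using z_Ints by (subst sin_eq_0) auto
  then have "A_series lam z = E - (sin (of_real pi * z) / of_real pi) * integral {..0} g"
    using csc \<open>E \<noteq> 0\<close> unfolding A_series_def integral a_def[symmetric]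
    by (simp add: field_simps)
  then show ?thesis
    unfolding E_def g_def .
qed

lemma isCont_integral_atMost_mult_cexp:
  fixes f :: "real \<Rightarrow> complex" and M :: real and z0 :: complex
  assumes f: "continuous_on {..0} f" and f_bound: "\<And>w. w \<le> 0 \<Longrightarrow> norm (f w) \<le> M"
    and z0: "Re z0 > 0"
  shows "isCont (\<lambda>z. integral {..0} (\<lambda>w. f w * exp (z * of_real w))) z0"
proof (rule continuous_at_sequentiallyI)
  fix u :: "nat \<Rightarrow> complex"
  assume u: "u \<longlonglongrightarrow> z0"
  define d where "d = Re z0 / 2"
  have d: "0 < d" "d < Re z0"
    using z0 by (auto simp: d_def)
  have "(\<lambda>n. Re (u n)) \<longlonglongrightarrow> Re z0"
    by (intro tendsto_intros u)
  from order_tendstoD(1)[OF this d(2)]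
  obtain K where K: "\<And>n. n \<ge> K \<Longrightarrow> Re (u n) > d"
    by (auto simp: eventually_sequentially)
  define F where "F n w = f w * exp (u (n + K) * of_real w)" for n w
  have dom: "(\<lambda>w. M * exp (d * w)) integrable_on {..0}"
    using d by (intro integrable_on_mult_right integrable_on_exp_atMost)
  have F_le: "norm (F n w) \<le> M * exp (d * w)" if "w \<in> {..0}" for n w
  proof -
    have "d * w \<ge> Re (u (n + K)) * w"
      using that K[of "n + K"] by (intro mult_right_mono_neg) auto
    then have "exp (Re (u (n + K)) * w) \<le> exp (d * w)"
      by simp
    with f_bound[of w] that show ?thesis
      by (simp add: F_def norm_mult mult_mono')
  qed
  have F_int: "F n integrable_on {..0}" for n
  proof (rule measurable_bounded_by_integrable_imp_integrable[OF _ dom F_le])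
    show "F n \<in> borel_measurable (lebesgue_on {..0})"
      unfolding F_def using f
      by (intro continuous_imp_measurable_on_sets_lebesgue continuous_intros) auto
  qed auto
  have F_lim: "(\<lambda>n. F n w) \<longlonglongrightarrow> f w * exp (z0 * of_real w)" for w
    unfolding F_def using LIMSEQ_ignore_initial_segment[OF u, of K]
    by (intro tendsto_intros)
  from dominated_convergence(2)[OF F_int dom F_le F_lim]
  show "(\<lambda>n. integral {..0} (\<lambda>w. f w * exp (u n * of_real w)))
      \<longlonglongrightarrow> integral {..0} (\<lambda>w. f w * exp (z0 * of_real w))"
    unfolding F_def by (rule LIMSEQ_offset)
qed

lemma eventually_at_of_nat_not_of_nat:
  "\<forall>\<^sub>F t in at (of_nat m :: complex). t \<notin> range of_nat"
  unfolding eventually_at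
proof (intro exI[of _ 1] conjI ballI impI)
  fix t :: complex
  assume "t \<noteq> of_nat m \<and> dist t (of_nat m) < 1"
  then show "t \<notin> range of_nat"
    by (auto simp: dist_of_nat)
qed simp

lemma A_eq_continuous_extension:
  assumes G: "isCont G z"
    and eq: "\<forall>\<^sub>F t in nhds z. t \<notin> range of_nat \<longrightarrow> A_series lam t = G t"
  shows "A lam z = G z"
proof (cases "z \<in> range of_nat")
  case False
  then show ?thesis
    using eventually_nhds_x_imp_x[OF eq] by (simp add: A_def)
next
  case True
  then obtain m where m: "z = of_nat m"
    by auto
  from eq have "\<forall>\<^sub>F t in at z. t \<notin> range of_nat \<longrightarrow> A_series lam t = G t"
    by (simp add: eventually_nhds_conv_at)
  with eventually_at_of_nat_not_of_nat[of m]
  have "\<forall>\<^sub>F t in at z. G t = A_series lam t"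
    unfolding m by eventually_elim auto
  with G have "(A_series lam \<longlongrightarrow> G z) (at z)"
    unfolding isCont_def by (rule Lim_transform_eventually)
  then show ?thesis
    using True by (simp add: A_def tendsto_Lim)
qed

lemma Ints_Re_pos_imp_of_nat:
  fixes t :: complex
  assumes "t \<in> \<int>" "Re t > 0"
  shows "t \<in> range of_nat"
proof -
  from assms(1) obtain k where k: "t = of_int k"
    by (auto elim: Ints_cases)
  with assms(2) have "t = of_nat (nat k)"
    by simp
  then show ?thesis
    by (rule image_eqI) simp
qed

lemma A_left_half_plane:
  fixes lam :: real and z :: complex
  assumes lam: "lam > 0" and z: "Re z < 0"
  shows "A lam z = (sin (of_real pi * z) / of_real pi) *
           integral {0..} (\<lambda>w. of_real (B (lam + w)) * exp (z * of_real w))"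
proof -
  have "z \<notin> range of_nat"
    using z by auto
  then show ?thesis
    using integral_B_cexp_atLeast_sums[OF lam z] by (simp add: A_def A_series_def sums_iff)
qed

lemma A_right_half_plane:
  fixes lam :: real and z :: complex
  assumes lam: "lam > 0" and z: "Re z > 0"
  shows "A lam z = exp (- of_real lam * z) - (sin (of_real pi * z) / of_real pi) *
           integral {..0} (\<lambda>w. of_real (B (lam + w)) * exp (z * of_real w))"
proof -
  define I where
    "I t = integral {..0} (\<lambda>w. of_real (B (lam + w)) * exp (t * of_real w))" for t :: complex
  have "isCont I z"
    unfolding I_def using z abs_B_le_1
    by (intro isCont_integral_atMost_mult_cexp[where M = 1] continuous_intros) auto
  then have cont:
      "isCont (\<lambda>t. exp (- of_real lam * t) - (sin (of_real pi * t) / of_real pi) * I t) z"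
    by (intro continuous_intros) simp
  have "\<forall>\<^sub>F t in nhds z. Re t > 0"
    using eventually_nhds_in_open[OF open_halfspace_Re_gt[of 0], of z] z by simp
  then have "\<forall>\<^sub>F t in nhds z. t \<notin> range of_nat \<longrightarrow>
      A_series lam t = exp (- of_real lam * t) - (sin (of_real pi * t) / of_real pi) * I t"
  proof (eventually_elim, intro impI)
    fix t :: complex
    assume t: "Re t > 0" "t \<notin> range of_nat"
    then have "t \<notin> \<int>"
      using Ints_Re_pos_imp_of_nat by blast
    from A_series_right_half_plane[OF lam t(1) this]
    show "A_series lam t = exp (- of_real lam * t) - (sin (of_real pi * t) / of_real pi) * I t"
      unfolding I_def .
  qed
  from A_eq_continuous_extension[OF cont this] show ?thesis
    unfolding I_def .
qed

theorem lemma2p1: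
  fixes lam :: real and z :: complex
  assumes "lam > 0"
  shows "(Re z < 0 \<longrightarrow>
            A lam z = (sin (complex_of_real pi * z) / complex_of_real pi) *
              integral {0..} (\<lambda>w::real. complex_of_real (B (lam + w)) * exp (z * complex_of_real w)))
       \<and> (Re z > 0 \<longrightarrow>
            A lam z = exp (- complex_of_real lam * z) -
              (sin (complex_of_real pi * z) / complex_of_real pi) *
              integral {..0} (\<lambda>w::real. complex_of_real (B (lam + w)) * exp (z * complex_of_real w)))"
  using A_left_half_plane[OF assms] A_right_half_plane[OF assms] by blast

end
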